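(* Let $p$ be a prime and $n$ a natural number. Let $(A,+,\circ)$ be a left brace of cardinality $p^{n}$ whose additive group is elementary abelian (an $\mathbb F_p$-brace), and let $a\in A$, $a\ne0$, be such that $a^{\circ p}=a\circ a\circ\cdots\circ a$ ($p$ factors) equals $0$. Then there are at least $p^{n/p}$ elements $b\in A$ such that $a*b=0$.
   Context: A (left) brace is a set $A$ with operations $+,\circ$ such that $(A,+)$ is an abelian group, $(A,\circ)$ is a group, and $a\circ(b+c)+a=a\circ b+a\circ c$; the identity of $(A,\circ)$ is $0$, and $a*b=a\circ b-a-b$. *)

theory Defs
  imports Complex_Main "HOL-Computational_Algebra.Primes" "HOL-Algebra.Group"
begin

definition add_grp :: "'a set \<Rightarrow> ('a \<Rightarrow> 'a \<Rightarrow> 'a) \<Rightarrow> 'a \<Rightarrow> 'a monoid" where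
  "add_grp A add z = \<lparr>carrier = A, mult = add, one = z\<rparr>"

definition circ_grp :: "'a set \<Rightarrow> ('a \<Rightarrow> 'a \<Rightarrow> 'a) \<Rightarrow> 'a \<Rightarrow> 'a monoid" where
  "circ_grp A circ z = \<lparr>carrier = A, mult = circ, one = z\<rparr>"

definition left_brace :: "'a set \<Rightarrow> ('a \<Rightarrow> 'a \<Rightarrow> 'a) \<Rightarrow> ('a \<Rightarrow> 'a \<Rightarrow> 'a) \<Rightarrow> 'a \<Rightarrow> bool" where
  "left_brace A add circ z \<longleftrightarrow>
     comm_group (add_grp A add z) \<and> group (circ_grp A circ z) \<and>
     (\<forall>a\<in>A. \<forall>b\<in>A. \<forall>c\<in>A. add (circ a (add b c)) a = add (circ a b) (circ a c))"

definition brace_neg :: "'a set \<Rightarrow> ('a \<Rightarrow> 'a \<Rightarrow> 'a) \<Rightarrow> 'a \<Rightarrow> 'a \<Rightarrow> 'a" where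
  "brace_neg A add z x = inv\<^bsub>add_grp A add z\<^esub> x"

definition brace_star :: "'a set \<Rightarrow> ('a \<Rightarrow> 'a \<Rightarrow> 'a) \<Rightarrow> ('a \<Rightarrow> 'a \<Rightarrow> 'a) \<Rightarrow> 'a \<Rightarrow> 'a \<Rightarrow> 'a \<Rightarrow> 'a" where
  "brace_star A add circ z a b =
     add (add (circ a b) (brace_neg A add z a)) (brace_neg A add z b)"

definition elementary_abelian :: "nat \<Rightarrow> 'a set \<Rightarrow> ('a \<Rightarrow> 'a \<Rightarrow> 'a) \<Rightarrow> 'a \<Rightarrow> bool" where
  "elementary_abelian p A add z \<longleftrightarrow> (\<forall>x\<in>A. x [^]\<^bsub>add_grp A add z\<^esub> p = z)"

end

theory Submission
  imports Defs "HOL-Algebra.FiniteProduct" "HOL-Algebra.Coset"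
begin

text \<open>Let \<open>\<lambda>\<^sub>a x = a \<circ> x - a\<close>. The brace axiom says that \<open>\<lambda>\<^sub>a\<close> is an additive endomorphism,
  and \<open>a \<mapsto> \<lambda>\<^sub>a\<close> is a homomorphism from \<open>(A,\<circ>)\<close>, so \<open>a\<^sup>\<circ>\<^sup>p = 0\<close> gives \<open>\<lambda>\<^sub>a\<^sup>p = id\<close>.
  The map \<open>f = \<lambda>\<^sub>a - id\<close> has kernel \<open>{b. a * b = 0}\<close>, and since \<open>A\<close> has characteristic \<open>p\<close>,
  \<open>f\<^sup>p = (\<lambda>\<^sub>a - id)\<^sup>p = \<lambda>\<^sub>a\<^sup>p - id = 0\<close>. For any endomorphism \<open>|ker f\<^sup>j| \<le> |ker f|\<^sup>j\<close>, hence
  \<open>p\<^sup>n = |ker f\<^sup>p| \<le> |ker f|\<^sup>p\<close>.\<close>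

lemma prime_dvd_Suc_pred_power_self:
  fixes p :: nat
  assumes "prime p"
  shows "p dvd Suc ((p - 1) ^ p)"
proof -
  have "(int p - 1) mod int p = (-1) mod int p"
    by (simp add: mod_diff_left_eq[symmetric])
  then have "((int p - 1) ^ p + 1) mod int p = ((-1) ^ p + 1) mod int p"
    by (metis mod_add_left_eq power_mod)
  moreover have "(-1::int) ^ p + 1 = 0 \<or> p = 2"
    using prime_odd_nat[OF assms] prime_ge_2_nat[OF assms] by (cases "p = 2") auto
  ultimately have "int p dvd (int p - 1) ^ p + 1"
    by (auto simp: dvd_eq_mod_eq_0)
  then show ?thesis
    using prime_gt_0_nat[OF assms] by (simp add: of_nat_diff add.commute flip: int_dvd_int_iff)
qed

lemma powr_divide_le_of_power_le:
  fixes b k :: real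
  assumes "0 < b" "0 \<le> k" "0 < q" "b ^ n \<le> k ^ q"
  shows "b powr (real n / real q) \<le> k"
proof -
  have "0 < b ^ n"
    using assms(1) by simp
  then have "0 < k"
    using assms(2-4) by (cases "k = 0") (auto simp: power_0_left)
  have "b powr (real n / real q) = (b ^ n) powr (1 / real q)"
    using assms(1) by (simp add: powr_powr flip: powr_realpow)
  also have "\<dots> \<le> (k ^ q) powr (1 / real q)"
    using assms by (intro powr_mono2) simp_all
  also have "\<dots> = k"
    using \<open>0 < k\<close> \<open>0 < q\<close> by (simp add: powr_powr flip: powr_realpow)
  finally show ?thesis .
qed

context comm_group
begin

lemma hom_finprod:
  assumes "h \<in> hom G G" "g \<in> I \<rightarrow> carrier G"
  shows "h (finprod G g I) = finprod G (h \<circ> g) I"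
  using assms(2)
proof (induction I rule: infinite_finite_induct)
  case (infinite I)
  then show ?case using assms(1) by (simp add: hom_one[OF _ is_group is_group])
next
  case empty
  then show ?case using assms(1) by (simp add: hom_one[OF _ is_group is_group])
next
  case (insert i I)
  then show ?case using assms(1) by (simp add: Pi_iff hom_mult hom_in_carrier)
qed

lemma endo_mult_hom:
  assumes "L \<in> hom G G" "M \<in> hom G G"
  shows "(\<lambda>y. L y \<otimes> M y) \<in> hom G G"
  using assms by (intro homI) (simp_all add: hom_mult hom_in_carrier m_ac)

lemma inv_hom: "(\<lambda>y. inv y) \<in> hom G G"
  by (intro homI) (simp_all add: inv_mult)

lemma nat_pow_hom: "(\<lambda>y. y [^] (q::nat)) \<in> hom G G"
  by (intro homI) (simp_all add: nat_pow_distrib)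

lemma funpow_endo_closed:
  assumes "L \<in> hom G G" "x \<in> carrier G"
  shows "(L ^^ i) x \<in> carrier G"
  by (induction i) (use assms in \<open>auto simp: hom_in_carrier\<close>)

lemma funpow_endo_mult_pow_binomial:
  assumes L: "L \<in> hom G G" and x: "x \<in> carrier G"
  shows "((\<lambda>y. L y \<otimes> y [^] q) ^^ j) x =
    (\<Otimes>i\<in>{..j}. (L ^^ i) x [^] ((j choose i) * q ^ (j - i)))"
proof (induction j)
  case 0
  then show ?case using x by simp
next
  case (Suc j)
  have Lx: "(L ^^ i) x \<in> carrier G" for i
    using funpow_endo_closed[OF L x] .
  define S where "S = (\<Otimes>i\<in>{..j}. (L ^^ i) x [^] ((j choose i) * q ^ (j - i)))"
  define a where "a i = (L ^^ i) x [^] ((if i = 0 then 0 else j choose (i - 1)) * q ^ (Suc j - i))"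
    for i
  define b where "b i = (L ^^ i) x [^] ((j choose i) * q ^ (Suc j - i))" for i
  have ab: "a i \<in> carrier G" "b i \<in> carrier G" for i
    by (simp_all add: a_def b_def Lx)
  have "((\<lambda>y. L y \<otimes> y [^] q) ^^ Suc j) x = L S \<otimes> S [^] q"
    using Suc by (simp add: S_def)
  also have "L S = (\<Otimes>i\<in>{..j}. a (Suc i))"
    unfolding S_def using L Lx
    by (auto simp: hom_finprod Pi_iff a_def hom_nat_pow hom_in_carrier intro!: finprod_cong)
  also have "S [^] q = (\<Otimes>i\<in>{..j}. b i)"
    unfolding S_def using Lx
    by (simp add: hom_finprod[OF nat_pow_hom] Pi_iff b_def comp_def nat_pow_pow Suc_diff_le
        ac_simps cong: finprod_cong)
  also have "(\<Otimes>i\<in>{..j}. a (Suc i)) = (\<Otimes>i\<in>{..Suc j}. a i)"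
    by (simp add: finprod_Suc2 Pi_iff ab a_def[of 0] del: finprod_Suc)
  also have "(\<Otimes>i\<in>{..j}. b i) = (\<Otimes>i\<in>{..Suc j}. b i)"
    by (simp add: Pi_iff ab b_def[of "Suc j"] binomial_eq_0)
  also have "(\<Otimes>i\<in>{..Suc j}. a i) \<otimes> (\<Otimes>i\<in>{..Suc j}. b i) = (\<Otimes>i\<in>{..Suc j}. a i \<otimes> b i)"
    by (simp add: Pi_iff ab)
  also have "\<dots> = (\<Otimes>i\<in>{..Suc j}. (L ^^ i) x [^] ((Suc j choose i) * q ^ (Suc j - i)))"
  proof (rule finprod_cong')
    fix i
    have "(if i = 0 then 0 else j choose (i - 1)) + (j choose i) = Suc j choose i"
      by (cases i) simp_all
    then show "a i \<otimes> b i = (L ^^ i) x [^] ((Suc j choose i) * q ^ (Suc j - i))"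
      by (simp add: a_def b_def Lx nat_pow_mult flip: distrib_right)
  qed (simp_all add: Lx)
  finally show ?case .
qed

text \<open>Here \<open>inv y = y [^] (p - 1)\<close>; the middle binomial coefficients are divisible by \<open>p\<close>,
  and the two outer terms combine to \<open>x [^] ((p - 1) ^ p + 1)\<close>.\<close>

lemma funpow_endo_mult_inv_prime_exponent:
  assumes p: "prime p" and exponent: "\<And>y. y \<in> carrier G \<Longrightarrow> y [^] p = \<one>"
    and L: "L \<in> hom G G" and Lp: "\<And>y. y \<in> carrier G \<Longrightarrow> (L ^^ p) y = y"
    and x: "x \<in> carrier G"
  shows "((\<lambda>y. L y \<otimes> inv y) ^^ p) x = \<one>"
proof -
  have pow_dvd_one: "y [^] k = \<one>" if y: "y \<in> carrier G" and "p dvd k" for y and k :: nat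
  proof -
    obtain l where "k = p * l"
      using \<open>p dvd k\<close> ..
    then show ?thesis
      using y by (simp add: exponent flip: nat_pow_pow)
  qed
  define m where "m = p - 2"
  have m: "p = Suc (Suc m)"
    using prime_ge_2_nat[OF p] by (simp add: m_def)
  define q where "q = p - 1"
  have inv_eq_pow: "inv y = y [^] q" if y: "y \<in> carrier G" for y
  proof (rule inv_equality)
    have "y [^] q \<otimes> y = y [^] Suc q"
      by (simp only: nat_pow_Suc)
    then show "y [^] q \<otimes> y = \<one>"
      using exponent[OF y] m by (simp add: q_def)
  qed (simp_all add: y)
  have pow_hom: "(\<lambda>y. L y \<otimes> y [^] q) \<in> hom G G"
    by (rule endo_mult_hom[OF L nat_pow_hom])
  define t where "t i = (L ^^ i) x [^] ((p choose i) * q ^ (p - i))" for i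
  have t: "t i \<in> carrier G" for i
    by (simp add: t_def funpow_endo_closed[OF L x])
  have "((\<lambda>y. L y \<otimes> inv y) ^^ k) x = ((\<lambda>y. L y \<otimes> y [^] q) ^^ k) x" for k
    by (induction k) (simp_all add: inv_eq_pow[OF funpow_endo_closed[OF pow_hom x]])
  also have "((\<lambda>y. L y \<otimes> y [^] q) ^^ p) x = finprod G t {..p}"
    unfolding t_def by (rule funpow_endo_mult_pow_binomial[OF L x])
  also have "\<dots> = t p \<otimes> (t 0 \<otimes> finprod G t {Suc 0..Suc m})"
    using finprod_Suc[of t "Suc m"] finprod_0'[of t "Suc m"] by (simp add: m Pi_iff t del: finprod_Suc)
  also have "finprod G t {Suc 0..Suc m} = \<one>"
  proof (rule finprod_one_eqI)
    fix i assume "i \<in> {Suc 0..Suc m}"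
    then have "p dvd (p choose i)"
      using p m by (intro dvd_choose_prime) auto
    then show "t i = \<one>"
      unfolding t_def by (intro pow_dvd_one funpow_endo_closed[OF L x]) simp
  qed
  also have "t p \<otimes> (t 0 \<otimes> \<one>) = x [^] Suc (q ^ p)"
    using x by (simp add: t_def Lp m_comm)
  also have "\<dots> = \<one>"
    using pow_dvd_one[OF x prime_dvd_Suc_pred_power_self[OF p]] by (simp add: q_def)
  finally show ?thesis .
qed

end

lemma (in group_hom) card_vimage_le_card_kernel:
  assumes "finite (carrier G)" "finite T"
  shows "card {x \<in> carrier G. h x \<in> T} \<le> card T * card (kernel G H h)"
proof -
  have finite_kernel: "finite (kernel G H h)"
    using assms(1) by (rule rev_finite_subset) (auto simp: kernel_def)
  have fiber: "card {x \<in> carrier G. h x = y} \<le> card (kernel G H h)" for y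
  proof (cases "\<exists>x\<^sub>0 \<in> carrier G. h x\<^sub>0 = y")
    case True
    then obtain x\<^sub>0 where x\<^sub>0: "x\<^sub>0 \<in> carrier G" "h x\<^sub>0 = y" by blast
    show ?thesis
    proof (rule card_inj_on_le[OF _ _ finite_kernel])
      show "inj_on (\<lambda>x. inv x\<^sub>0 \<otimes> x) {x \<in> carrier G. h x = y}"
        using x\<^sub>0 by (auto intro: inj_onI)
      show "(\<lambda>x. inv x\<^sub>0 \<otimes> x) ` {x \<in> carrier G. h x = y} \<subseteq> kernel G H h"
        using x\<^sub>0 by (auto simp: kernel_def)
    qed
  next
    case False
    then have "{x \<in> carrier G. h x = y} = {}"
      by blast
    then show ?thesis
      by (metis card.empty le0)
  qed
  have "{x \<in> carrier G. h x \<in> T} = (\<Union>y\<in>T. {x \<in> carrier G. h x = y})"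
    by blast
  also have "card \<dots> \<le> (\<Sum>y\<in>T. card {x \<in> carrier G. h x = y})"
    using assms(2) by (rule card_UN_le)
  also have "\<dots> \<le> card T * card (kernel G H h)"
    using sum_bounded_above[of T "\<lambda>y. card {x \<in> carrier G. h x = y}", OF fiber] by simp
  finally show ?thesis .
qed

lemma (in group) card_kernel_funpow_le:
  assumes f: "f \<in> hom G G" and finite: "finite (carrier G)"
  shows "card (kernel G G (f ^^ j)) \<le> card (kernel G G f) ^ j"
proof (induction j)
  case 0
  have "kernel G G (\<lambda>x. x) = {\<one>}"
    by (auto simp: kernel_def)
  then show ?case by simp
next
  case (Suc j)
  interpret group_hom G G f
    using f by unfold_locales
  have "kernel G G (f ^^ Suc j) = {x \<in> carrier G. f x \<in> kernel G G (f ^^ j)}"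
    by (auto simp: kernel_def funpow_Suc_right simp del: funpow.simps)
  also have "card \<dots> \<le> card (kernel G G (f ^^ j)) * card (kernel G G f)"
    by (rule card_vimage_le_card_kernel[OF finite])
      (rule rev_finite_subset[OF finite], auto simp: kernel_def)
  also have "\<dots> \<le> card (kernel G G f) ^ Suc j"
    using Suc by simp
  finally show ?case .
qed

locale brace =
  fixes A :: "'a set" and add circ :: "'a \<Rightarrow> 'a \<Rightarrow> 'a" and z :: 'a
  assumes left_brace: "left_brace A add circ z"
begin

abbreviation G where "G \<equiv> add_grp A add z"
abbreviation H where "H \<equiv> circ_grp A circ z"

sublocale additive: comm_group G
  using left_brace by (simp add: left_brace_def)

sublocale multiplicative: group H
  using left_brace by (simp add: left_brace_def)

lemma circ_grp_carrier [simp]: "carrier H = carrier G"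
  and circ_grp_one [simp]: "\<one>\<^bsub>H\<^esub> = \<one>\<^bsub>G\<^esub>"
  by (simp_all add: add_grp_def circ_grp_def)

lemma circ_closed [simp]: "a \<in> carrier G \<Longrightarrow> b \<in> carrier G \<Longrightarrow> a \<otimes>\<^bsub>H\<^esub> b \<in> carrier G"
  and circ_pow_closed [simp]: "a \<in> carrier G \<Longrightarrow> a [^]\<^bsub>H\<^esub> (i::nat) \<in> carrier G"
  using multiplicative.m_closed multiplicative.nat_pow_closed by simp_all

lemma brace_distrib:
  assumes "a \<in> carrier G" "b \<in> carrier G" "c \<in> carrier G"
  shows "(a \<otimes>\<^bsub>H\<^esub> (b \<otimes>\<^bsub>G\<^esub> c)) \<otimes>\<^bsub>G\<^esub> a = (a \<otimes>\<^bsub>H\<^esub> b) \<otimes>\<^bsub>G\<^esub> (a \<otimes>\<^bsub>H\<^esub> c)"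
  using left_brace assms by (simp add: left_brace_def add_grp_def circ_grp_def)

definition lambda_map :: "'a \<Rightarrow> 'a \<Rightarrow> 'a" where
  "lambda_map a x = (a \<otimes>\<^bsub>H\<^esub> x) \<otimes>\<^bsub>G\<^esub> inv\<^bsub>G\<^esub> a"

lemma lambda_map_closed [simp]:
  "a \<in> carrier G \<Longrightarrow> x \<in> carrier G \<Longrightarrow> lambda_map a x \<in> carrier G"
  by (simp add: lambda_map_def)

lemma lambda_map_hom:
  assumes a: "a \<in> carrier G"
  shows "lambda_map a \<in> hom G G"
proof (rule homI)
  fix x y assume x: "x \<in> carrier G" and y: "y \<in> carrier G"
  have "lambda_map a x \<otimes>\<^bsub>G\<^esub> lambda_map a y =
      (a \<otimes>\<^bsub>H\<^esub> x) \<otimes>\<^bsub>G\<^esub> (a \<otimes>\<^bsub>H\<^esub> y) \<otimes>\<^bsub>G\<^esub> inv\<^bsub>G\<^esub> a \<otimes>\<^bsub>G\<^esub> inv\<^bsub>G\<^esub> a"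
    using a x y by (simp add: lambda_map_def additive.m_ac)
  also have "(a \<otimes>\<^bsub>H\<^esub> x) \<otimes>\<^bsub>G\<^esub> (a \<otimes>\<^bsub>H\<^esub> y) = (a \<otimes>\<^bsub>H\<^esub> (x \<otimes>\<^bsub>G\<^esub> y)) \<otimes>\<^bsub>G\<^esub> a"
    using a x y by (simp add: brace_distrib)
  also have "(a \<otimes>\<^bsub>H\<^esub> (x \<otimes>\<^bsub>G\<^esub> y)) \<otimes>\<^bsub>G\<^esub> a \<otimes>\<^bsub>G\<^esub> inv\<^bsub>G\<^esub> a = a \<otimes>\<^bsub>H\<^esub> (x \<otimes>\<^bsub>G\<^esub> y)"
    using a x y by (simp add: additive.m_assoc)
  finally show "lambda_map a (x \<otimes>\<^bsub>G\<^esub> y) = lambda_map a x \<otimes>\<^bsub>G\<^esub> lambda_map a y"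
    by (simp add: lambda_map_def)
qed (use a in simp)

lemma lambda_map_one:
  "x \<in> carrier G \<Longrightarrow> lambda_map \<one>\<^bsub>G\<^esub> x = x"
  by (metis circ_grp_carrier circ_grp_one additive.inv_one additive.r_one multiplicative.l_one
      lambda_map_def)

lemma lambda_map_mult:
  assumes a: "a \<in> carrier G" and b: "b \<in> carrier G" and x: "x \<in> carrier G"
  shows "lambda_map (a \<otimes>\<^bsub>H\<^esub> b) x = lambda_map a (lambda_map b x)"
proof -
  interpret lambda_a: group_hom G G "lambda_map a"
    using lambda_map_hom[OF a] by unfold_locales
  have "lambda_map a (lambda_map b x) =
      lambda_map a (b \<otimes>\<^bsub>H\<^esub> x) \<otimes>\<^bsub>G\<^esub> inv\<^bsub>G\<^esub> lambda_map a b"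
    using b x by (simp add: lambda_map_def[of b])
  also have "\<dots> = (a \<otimes>\<^bsub>H\<^esub> (b \<otimes>\<^bsub>H\<^esub> x)) \<otimes>\<^bsub>G\<^esub> inv\<^bsub>G\<^esub> (a \<otimes>\<^bsub>H\<^esub> b)"
    using a b x
    by (simp add: lambda_map_def additive.inv_mult_group additive.inv_solve_right additive.m_assoc)
  finally show ?thesis
    using a b x by (simp add: lambda_map_def multiplicative.m_assoc)
qed

lemma funpow_lambda_map:
  assumes "a \<in> carrier G" "x \<in> carrier G"
  shows "(lambda_map a ^^ i) x = lambda_map (a [^]\<^bsub>H\<^esub> i) x"
  using assms(2)
  by (induction i arbitrary: x)
    (use assms(1) in \<open>simp_all add: lambda_map_one lambda_map_mult funpow_Suc_right del: funpow.simps\<close>)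

lemma brace_star_eq_lambda_map:
  "brace_star A add circ z a b = lambda_map a b \<otimes>\<^bsub>G\<^esub> inv\<^bsub>G\<^esub> b"
  by (simp add: brace_star_def brace_neg_def lambda_map_def circ_grp_def add_grp_def)

end

theorem proposition3p5:
  fixes p n :: nat and A :: "'a set" and add circ :: "'a \<Rightarrow> 'a \<Rightarrow> 'a" and z a :: 'a
  assumes "prime p"
    and "left_brace A add circ z"
    and "finite A" and "card A = p ^ n"
    and "elementary_abelian p A add z"
    and "a \<in> A" and "a \<noteq> z"
    and "a [^]\<^bsub>circ_grp A circ z\<^esub> p = z"
  shows "real (card {b \<in> A. brace_star A add circ z a b = z}) \<ge> real p powr (real n / real p)"
proof -
  interpret brace A add circ z
    by (rule brace.intro) fact
  have carrier: "carrier G = A" and one: "\<one>\<^bsub>G\<^esub> = z"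
    by (simp_all add: add_grp_def)
  have a: "a \<in> carrier G"
    using assms(6) carrier by simp
  have exponent: "x [^]\<^bsub>G\<^esub> p = \<one>\<^bsub>G\<^esub>" if "x \<in> carrier G" for x
    using assms(5) that by (simp add: elementary_abelian_def add_grp_def)
  have "a [^]\<^bsub>H\<^esub> p = \<one>\<^bsub>G\<^esub>"
    using assms(8) by (simp add: add_grp_def)
  then have lambda_order: "(lambda_map a ^^ p) x = x" if "x \<in> carrier G" for x
    using that a by (simp add: funpow_lambda_map lambda_map_one)
  define f where "f y = lambda_map a y \<otimes>\<^bsub>G\<^esub> inv\<^bsub>G\<^esub> y" for y
  have f_hom: "f \<in> hom G G"
    unfolding f_def[abs_def] using lambda_map_hom[OF a] additive.inv_hom
    by (rule additive.endo_mult_hom)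
  have "kernel G G (f ^^ p) = A"
    using additive.funpow_endo_mult_inv_prime_exponent[OF assms(1) exponent lambda_map_hom[OF a]
        lambda_order]
    by (auto simp: kernel_def f_def[abs_def] carrier)
  moreover have "kernel G G f = {b \<in> A. brace_star A add circ z a b = z}"
    by (auto simp: kernel_def f_def brace_star_eq_lambda_map carrier one)
  ultimately have "p ^ n \<le> card {b \<in> A. brace_star A add circ z a b = z} ^ p"
    using additive.card_kernel_funpow_le[OF f_hom, of p] assms(3,4) carrier by simp
  then show ?thesis
    using prime_gt_0_nat[OF assms(1)]
    by (intro powr_divide_le_of_power_le) (simp_all flip: of_nat_power)
qed

end
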